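(* Let $f\in L^1(\partial\Omega)$ and let $u\in L^1(\Omega)$ be such that $Tu=f$ $\mathcal{H}$-a.e. on $\partial\Omega$. Then for $\mathcal{L}^1$-a.e. $t\in\mathbb{R}$, $T\chi_{\{u>t\}}=\chi_{\{f>t\}}$ $\mathcal{H}$-a.e. on $\partial\Omega$.
   Context: Standing setting: $(X,d,\mu)$ is a complete metric measure space, $\mu$ is a Borel regular measure which is doubling (there is $C_D\ge1$ with $0<\mu(B(x,2r))\le C_D\mu(B(x,r))<\infty$ for all $x\in X$, $r>0$), and $X$ supports a $(1,1)$-Poincaré inequality. The codimension one Hausdorff measure is $\mathcal{H}(E)=\lim_{\delta\to0^+}\inf\{\sum_i\mu(B_i)/\mathrm{rad}(B_i): E\subset\bigcup_iB_i,\ \mathrm{rad}(B_i)<\delta\}$. $\Omega\subset X$ is a bounded domain with $\mu(X\setminus\Omega)>0$ and $\mathcal{H}(\partial\Omega)<\infty$ (with $\mathcal{H}|_{\partial\Omega}$ doubling and lower codimension 1 Ahlfors regular). $\mathcal{L}^1$ is Lebesgue measure on $\mathbb{R}$. Trace: a function $u\in L^1(\Omega)$ has trace $Tu(x)\in\mathbb{R}$ at $x\in\partial\Omega$ if $\lim_{r\to0^+}\frac{1}{\mu(B(x,r)\cap\Omega)}\int_{B(x,r)\cap\Omega}|u-Tu(x)|\,d\mu=0$. *)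

theory Defs
  imports "HOL-Analysis.Analysis"
begin

definition curve_length :: "(real \<Rightarrow> 'a::metric_space) \<Rightarrow> real \<Rightarrow> real \<Rightarrow> ennreal" where
  "curve_length \<gamma> a b =
     (SUP ts \<in> {ts. sorted ts \<and> set ts \<subseteq> {a..b}}.
        ennreal (\<Sum>i<length ts - 1. dist (\<gamma> (ts ! i)) (\<gamma> (ts ! Suc i))))"

definition arc_length_param :: "(real \<Rightarrow> 'a::metric_space) \<Rightarrow> real \<Rightarrow> bool" where
  "arc_length_param \<gamma> L \<longleftrightarrow>
     (\<forall>s t. 0 \<le> s \<and> s \<le> t \<and> t \<le> L \<longrightarrow> curve_length \<gamma> s t = ennreal (t - s))"

text \<open>g is an upper gradient of u: for every nonconstant compact rectifiable curve,
  in its arc-length parametrization gamma : [0,L] -> X (L > 0),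
  |u(gamma 0) - u(gamma L)| is at most the line integral of g along gamma.\<close>
definition upper_gradient :: "('a::metric_space \<Rightarrow> real) \<Rightarrow> ('a \<Rightarrow> ennreal) \<Rightarrow> bool" where
  "upper_gradient u g \<longleftrightarrow> g \<in> borel_measurable borel \<and>
     (\<forall>\<gamma> L. 0 < L \<and> arc_length_param \<gamma> L \<longrightarrow>
        ennreal \<bar>u (\<gamma> 0) - u (\<gamma> L)\<bar> \<le> (\<integral>\<^sup>+ t\<in>{0..L}. g (\<gamma> t) \<partial>lborel))"

definition doubling_measure :: "'a::metric_space measure \<Rightarrow> bool" where
  "doubling_measure \<mu> \<longleftrightarrow> (\<exists>C\<ge>1. \<forall>x r. 0 < r \<longrightarrow>
      0 < emeasure \<mu> (ball x (2*r)) \<and>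
      emeasure \<mu> (ball x (2*r)) \<le> ennreal C * emeasure \<mu> (ball x r) \<and>
      emeasure \<mu> (ball x r) < \<infinity>)"

definition poincare_11 :: "'a::metric_space measure \<Rightarrow> bool" where
  "poincare_11 \<mu> \<longleftrightarrow> (\<exists>C>0. \<exists>lam\<ge>1. \<forall>u g x r.
      u \<in> borel_measurable borel \<and> (\<forall>y s. set_integrable \<mu> (ball y s) u) \<and>
      upper_gradient u g \<and> 0 < r \<longrightarrow>
      (\<integral>\<^sup>+ y\<in>ball x r. ennreal \<bar>u y - (\<integral>z\<in>ball x r. u z \<partial>\<mu>) / measure \<mu> (ball x r)\<bar> \<partial>\<mu>)
          / emeasure \<mu> (ball x r)
      \<le> ennreal (C * r) * ((\<integral>\<^sup>+ y\<in>ball x (lam*r). g y \<partial>\<mu>) / emeasure \<mu> (ball x (lam*r))))"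

text \<open>Covers by countably many balls B(c i, r i) with radii less than delta.
  Radius 0 (empty ball) is allowed and contributes 0, so that finite covers are included.\<close>
definition codim1_H_delta :: "'a::metric_space measure \<Rightarrow> real \<Rightarrow> 'a set \<Rightarrow> ennreal" where
  "codim1_H_delta \<mu> \<delta> E =
     (INF cr \<in> {(c, r). (\<forall>i::nat. 0 \<le> r i \<and> r i < \<delta>) \<and> E \<subseteq> (\<Union>i. ball (c i) (r i))}.
        (\<Sum>i. if snd cr i = 0 then 0
              else emeasure \<mu> (ball (fst cr i) (snd cr i)) / ennreal (snd cr i)))"

definition codim1_H :: "'a::metric_space measure \<Rightarrow> 'a set \<Rightarrow> ennreal" where
  "codim1_H \<mu> E = (SUP \<delta>\<in>{0<..}. codim1_H_delta \<mu> \<delta> E)"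

definition codim1_H_on :: "'a::metric_space measure \<Rightarrow> 'a set \<Rightarrow> 'a measure" where
  "codim1_H_on \<mu> S = measure_of S (sets (restrict_space borel S)) (codim1_H \<mu>)"

definition H_ae_on :: "'a::metric_space measure \<Rightarrow> 'a set \<Rightarrow> ('a \<Rightarrow> bool) \<Rightarrow> bool" where
  "H_ae_on \<mu> S P \<longleftrightarrow> (\<exists>N. codim1_H \<mu> N = 0 \<and> (\<forall>x\<in>S - N. P x))"

definition has_trace :: "'a::metric_space measure \<Rightarrow> 'a set \<Rightarrow> ('a \<Rightarrow> real) \<Rightarrow> 'a \<Rightarrow> real \<Rightarrow> bool" where
  "has_trace \<mu> \<Omega> u x v \<longleftrightarrow>
     ((\<lambda>r. (\<integral>\<^sup>+ y\<in>ball x r \<inter> \<Omega>. ennreal \<bar>u y - v\<bar> \<partial>\<mu>) / emeasure \<mu> (ball x r \<inter> \<Omega>))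
        \<longlongrightarrow> 0) (at_right 0)"

definition boundary_doubling :: "'a::metric_space measure \<Rightarrow> 'a set \<Rightarrow> bool" where
  "boundary_doubling \<mu> \<Omega> \<longleftrightarrow> (\<exists>C\<ge>1. \<forall>x\<in>frontier \<Omega>. \<forall>r>0.
      codim1_H \<mu> (ball x (2*r) \<inter> frontier \<Omega>) \<le> ennreal C * codim1_H \<mu> (ball x r \<inter> frontier \<Omega>))"

definition lower_codim1_ahlfors :: "'a::metric_space measure \<Rightarrow> 'a set \<Rightarrow> bool" where
  "lower_codim1_ahlfors \<mu> \<Omega> \<longleftrightarrow> (\<exists>C\<ge>1. \<forall>x\<in>frontier \<Omega>. \<forall>r. 0 < r \<and> r < 2 * diameter \<Omega> \<longrightarrow>
      emeasure \<mu> (ball x r) / ennreal (C * r) \<le> codim1_H \<mu> (ball x r \<inter> frontier \<Omega>))"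

end

theory Submission
  imports Defs
begin

text \<open>
  For all but countably many levels t the set {f = t} is H-null on the boundary: H is a metric
  outer measure, so by Caratheodory's criterion it is a measure on the Borel sets, and a finite
  measure (here H restricted to the boundary, where it is finite) has only countably many atoms
  in the push-forward under f. At a boundary point x with Tu(x) = f(x) \<noteq> t the trace of the
  level set indicator is simply the indicator of {f > t} at x, because
  |\<chi>{u > t}(y) - \<chi>{f > t}(x)| \<le> |u(y) - f(x)| / |f(x) - t|.
\<close>

lemma ennreal_suminf_tail_le:
  fixes c :: "nat \<Rightarrow> ennreal"
  assumes "(\<Sum>k. c k) \<noteq> \<infinity>" and "0 < e"
  obtains N where "(\<Sum>i. c (i + N)) \<le> ennreal e"
proof -
  define g where "g k = enn2real (c k)" for k
  have "c k < \<infinity>" for k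
    using assms(1) ennreal_suminf_lessD[of c] by (simp add: less_top)
  then have c_eq: "c = (\<lambda>k. ennreal (g k))" by (simp add: g_def fun_eq_iff)
  have g_nn: "0 \<le> g k" for k by (simp add: g_def)
  have "summable g" using assms(1) g_nn unfolding c_eq by (intro summable_suminf_not_top) simp_all
  then obtain N where N: "norm (\<Sum>i. g (i + N)) < e"
    using suminf_exist_split[OF assms(2)] by blast
  have tail: "summable (\<lambda>i. g (i + N))" using \<open>summable g\<close> by (rule summable_ignore_initial_segment)
  have "(\<Sum>i. c (i + N)) = ennreal (\<Sum>i. g (i + N))"
    unfolding c_eq by (intro suminf_ennreal2 g_nn tail)
  also have "\<dots> \<le> ennreal e"
    using N by (intro ennreal_leI) (simp add: suminf_nonneg[OF tail g_nn])
  finally show ?thesis by (rule that)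
qed

definition shell :: "('a \<Rightarrow> real) \<Rightarrow> (nat \<Rightarrow> real) \<Rightarrow> 'a set \<Rightarrow> nat \<Rightarrow> 'a set" where
  "shell d a X k = {x\<in>X. a (Suc k) < d x \<and> d x \<le> a k}"

lemma diff_closed_subset_shells:
  fixes F X :: "'a::metric_space set"
  defines "a \<equiv> \<lambda>k::nat. 1 / (real k + 1)"
  assumes "closed F" "F \<noteq> {}"
  shows "X - F \<subseteq> {x\<in>X. a n < infdist x F} \<union> (\<Union>i. shell (\<lambda>x. infdist x F) a X (i + n))"
proof
  fix x assume x: "x \<in> X - F"
  then have dpos: "0 < infdist x F" using infdist_pos_not_in_closed[OF assms(2,3)] by simp
  show "x \<in> {x\<in>X. a n < infdist x F} \<union> (\<Union>i. shell (\<lambda>x. infdist x F) a X (i + n))"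
  proof (cases "a n < infdist x F")
    case True then show ?thesis using x by simp
  next
    case False
    define m where "m = nat \<lfloor>1 / infdist x F\<rfloor>"
    have "real n + 1 \<le> 1 / infdist x F" using False dpos by (simp add: a_def field_simps)
    then have mn: "n + 1 \<le> m" unfolding m_def by linarith
    have "real m \<le> 1 / infdist x F" "1 / infdist x F < real m + 1"
      unfolding m_def using dpos by auto
    then have "infdist x F \<le> 1 / real m" "1 / (real m + 1) < infdist x F"
      using dpos mn by (simp_all add: field_simps)
    then have "x \<in> shell (\<lambda>x. infdist x F) a X ((m - 1 - n) + n)"
      using x mn by (auto simp: shell_def a_def)
    then show ?thesis by blast
  qed
qed

section \<open>Metric outer measures\<close>

locale metric_outer_measure =
  fixes \<phi> :: "'a::metric_space set \<Rightarrow> ennreal"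
  assumes empty_eq_0 [simp]: "\<phi> {} = 0"
    and mono_subset: "A \<subseteq> B \<Longrightarrow> \<phi> A \<le> \<phi> B"
    and UNION_le_suminf: "\<phi> (\<Union>i. C i) \<le> (\<Sum>i. \<phi> (C i))"
    and separated_add_le:
      "0 < \<eta> \<Longrightarrow> (\<And>a b. a \<in> A \<Longrightarrow> b \<in> B \<Longrightarrow> \<eta> \<le> dist a b) \<Longrightarrow> \<phi> A + \<phi> B \<le> \<phi> (A \<union> B)"
begin

lemma Un_le: "\<phi> (A \<union> B) \<le> \<phi> A + \<phi> B"
  using UNION_le_suminf[of "binaryset A B"] by (simp add: UN_binaryset_eq suminf_binaryset_eq)

lemma outer_measure_space: "outer_measure_space UNIV \<phi>"
  unfolding outer_measure_space_def positive_def increasing_def countably_subadditive_def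
  by (auto intro: mono_subset UNION_le_suminf)

lemma separated_by_lipschitz_add_le:
  fixes d :: "'a \<Rightarrow> real"
  assumes lip: "\<And>x y. \<bar>d x - d y\<bar> \<le> dist x y" and "\<beta> < \<alpha>"
    and A: "\<And>x. x \<in> A \<Longrightarrow> \<alpha> < d x" and B: "\<And>y. y \<in> B \<Longrightarrow> d y \<le> \<beta>"
  shows "\<phi> A + \<phi> B \<le> \<phi> (A \<union> B)"
proof (rule separated_add_le[of "\<alpha> - \<beta>"])
  show "0 < \<alpha> - \<beta>" using assms by simp
  fix a b assume "a \<in> A" "b \<in> B"
  then show "\<alpha> - \<beta> \<le> dist a b" using A[of a] B[of b] lip[of a b] by linarith
qed

lemma sum_alternate_shells_le:
  fixes d :: "'a \<Rightarrow> real" and a :: "nat \<Rightarrow> real"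
  assumes lip: "\<And>x y. \<bar>d x - d y\<bar> \<le> dist x y" and a: "\<And>i k. i < k \<Longrightarrow> a k < a i"
  shows "(\<Sum>k<m. \<phi> (shell d a X (2*k+j))) \<le> \<phi> X"
proof -
  have a_mono: "a k \<le> a i" if "i \<le> k" for i k
    using a[of i k] that by (auto simp: le_less)
  have "(\<Sum>k<m. \<phi> (shell d a X (2*k+j))) \<le> \<phi> (\<Union>k<m. shell d a X (2*k+j))"
  proof (induction m)
    case (Suc m)
    have "(\<Sum>k<Suc m. \<phi> (shell d a X (2*k+j)))
        \<le> \<phi> (\<Union>k<m. shell d a X (2*k+j)) + \<phi> (shell d a X (2*m+j))"
      using Suc by (simp add: add_right_mono)
    also have "\<dots> \<le> \<phi> ((\<Union>k<m. shell d a X (2*k+j)) \<union> shell d a X (2*m+j))"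
    proof (cases m)
      case (Suc m')
      show ?thesis
      proof (rule separated_by_lipschitz_add_le[OF lip, of "a (2*m+j)" "a (2*m+j - 1)"])
        show "a (2*m+j) < a (2*m+j - 1)" using Suc by (intro a) simp
        fix x assume "x \<in> (\<Union>k<m. shell d a X (2*k+j))"
        then obtain k where "k < m" "a (Suc (2*k+j)) < d x" by (auto simp: shell_def)
        moreover have "a (2*m+j - 1) \<le> a (Suc (2*k+j))"
          using \<open>k < m\<close> by (intro a_mono) arith
        ultimately show "a (2*m+j - 1) < d x" by simp
      qed (simp add: shell_def)
    qed simp
    also have "\<dots> = \<phi> (\<Union>k<Suc m. shell d a X (2*k+j))" by (simp add: lessThan_Suc Un_commute)
    finally show ?case .
  qed simp
  also have "\<dots> \<le> \<phi> X" by (rule mono_subset) (auto simp: shell_def)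
  finally show ?thesis .
qed

lemma suminf_shells_le:
  fixes d :: "'a \<Rightarrow> real" and a :: "nat \<Rightarrow> real"
  assumes lip: "\<And>x y. \<bar>d x - d y\<bar> \<le> dist x y" and a: "\<And>i k. i < k \<Longrightarrow> a k < a i"
  shows "(\<Sum>k. \<phi> (shell d a X k)) \<le> 2 * \<phi> X"
proof (rule suminf_le_const[OF summableI])
  fix n
  have split: "(\<Sum>k<2*n. f k) = (\<Sum>k<n. f (2*k)) + (\<Sum>k<n. f (2*k+1))" for f :: "nat \<Rightarrow> ennreal"
    by (induction n) (auto simp: add_ac)
  have "(\<Sum>k<n. \<phi> (shell d a X k)) \<le> (\<Sum>k<2*n. \<phi> (shell d a X k))" by (intro sum_mono2) auto
  also have "\<dots> = (\<Sum>k<n. \<phi> (shell d a X (2*k+0))) + (\<Sum>k<n. \<phi> (shell d a X (2*k+1)))"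
    by (simp add: split)
  also have "\<dots> \<le> \<phi> X + \<phi> X" by (intro add_mono sum_alternate_shells_le[OF lip a])
  finally show "(\<Sum>k<n. \<phi> (shell d a X k)) \<le> 2 * \<phi> X" by (simp add: mult_2)
qed

text \<open>
  Caratheodory's criterion: the part of X at distance more than 1/(n+1) from F is separated from
  X \<inter> F, and what remains of X - F lies in shells whose total mass is finite, hence has small mass.
\<close>
lemma closed_split_le:
  assumes "closed F"
  shows "\<phi> (X \<inter> F) + \<phi> (X - F) \<le> \<phi> X"
proof (cases "F = {} \<or> \<phi> X = \<infinity>")
  case False
  then have "F \<noteq> {}" and X_fin: "\<phi> X < \<infinity>" by (auto simp: less_top)
  define d where "d = (\<lambda>x. infdist x F)"
  define a where "a = (\<lambda>k::nat. 1 / (real k + 1))"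
  have lip: "\<bar>d x - d y\<bar> \<le> dist x y" for x y unfolding d_def by (rule infdist_triangle_abs)
  have a: "a k < a i" if "i < k" for i k using that by (simp add: a_def frac_less2)
  have far: "\<phi> (X \<inter> F) + \<phi> {x\<in>X. a n < d x} \<le> \<phi> X" for n
  proof -
    have "\<phi> (X \<inter> F) + \<phi> {x\<in>X. a n < d x} \<le> \<phi> (X \<inter> F \<union> {x\<in>X. a n < d x})"
    proof (rule separated_add_le[of "a n"])
      fix x y assume "x \<in> X \<inter> F" "y \<in> {x\<in>X. a n < d x}"
      then have "infdist y F \<le> dist y x" "a n < d y" by (auto intro: infdist_le)
      then show "a n \<le> dist x y" by (simp add: d_def dist_commute)
    qed (simp add: a_def)
    also have "\<dots> \<le> \<phi> X" by (rule mono_subset) auto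
    finally show ?thesis .
  qed
  have "(\<Sum>k. \<phi> (shell d a X k)) \<le> 2 * \<phi> X" by (rule suminf_shells_le[OF lip a])
  also have "\<dots> < \<infinity>" using X_fin by (simp add: ennreal_mult_less_top)
  finally have shells_fin: "(\<Sum>k. \<phi> (shell d a X k)) \<noteq> \<infinity>" by simp
  show ?thesis
  proof (rule ennreal_le_epsilon)
    fix e :: real assume "0 < e"
    then obtain N where N: "(\<Sum>i. \<phi> (shell d a X (i + N))) \<le> ennreal e"
      using ennreal_suminf_tail_le[OF shells_fin] by blast
    have "\<phi> (X - F) \<le> \<phi> ({x\<in>X. a N < d x} \<union> (\<Union>i. shell d a X (i + N)))"
      using diff_closed_subset_shells[OF assms \<open>F \<noteq> {}\<close>]
      by (intro mono_subset) (simp add: a_def d_def)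
    also have "\<dots> \<le> \<phi> {x\<in>X. a N < d x} + (\<Sum>i. \<phi> (shell d a X (i + N)))"
      by (intro order_trans[OF Un_le] add_left_mono UNION_le_suminf)
    also have "\<dots> \<le> \<phi> {x\<in>X. a N < d x} + ennreal e" by (intro add_left_mono N)
    finally have "\<phi> (X \<inter> F) + \<phi> (X - F) \<le> (\<phi> (X \<inter> F) + \<phi> {x\<in>X. a N < d x}) + ennreal e"
      by (simp add: add.assoc add_left_mono)
    also have "\<dots> \<le> \<phi> X + ennreal e" by (intro add_right_mono far)
    finally show "\<phi> (X \<inter> F) + \<phi> (X - F) \<le> \<phi> X + ennreal e" .
  qed
qed auto

lemma measure_space_lambda_system: "measure_space UNIV (lambda_system UNIV UNIV \<phi>) \<phi>"
  using sigma_algebra.caratheodory_lemma[OF sigma_algebra_Pow[of UNIV, unfolded Pow_UNIV]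
      outer_measure_space] .

lemma borel_subset_lambda_system: "sets borel \<subseteq> lambda_system UNIV UNIV \<phi>"
proof -
  have "sigma_algebra UNIV (lambda_system UNIV UNIV \<phi>)"
    using measure_space_lambda_system by (simp add: measure_space_def)
  moreover have "F \<in> lambda_system UNIV UNIV \<phi>" if "closed F" for F
  proof -
    have "\<phi> (X \<inter> F) + \<phi> (X - F) = \<phi> X" for X
    proof (rule antisym)
      have "\<phi> X = \<phi> ((X \<inter> F) \<union> (X - F))" by (simp add: Int_Diff_Un)
      also have "\<dots> \<le> \<phi> (X \<inter> F) + \<phi> (X - F)" by (rule Un_le)
      finally show "\<phi> X \<le> \<phi> (X \<inter> F) + \<phi> (X - F)" .
    qed (rule closed_split_le[OF that])
    then show ?thesis by (simp add: algebra.lambda_system_eq[OF algebra_Pow[of UNIV, unfolded Pow_UNIV]])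
  qed
  ultimately have "sigma_sets UNIV (Collect closed) \<subseteq> lambda_system UNIV UNIV \<phi>"
    by (intro sigma_algebra.sigma_sets_subset) auto
  then show ?thesis by (simp add: borel_eq_closed)
qed

lemma AE_level_sets_null:
  fixes f :: "'a \<Rightarrow> real"
  assumes "closed S" and "\<phi> S < \<infinity>" and f: "f \<in> borel_measurable (restrict_space borel S)"
  shows "AE t in lborel. \<phi> {x\<in>S. f x = t} = 0"
proof -
  let ?B = "restrict_space borel S"
  let ?M = "measure_of S (sets ?B) \<phi>"
  have "sets ?B \<subseteq> lambda_system UNIV UNIV \<phi>"
    using borel_subset_lambda_system \<open>closed S\<close> by (auto simp: sets_restrict_space_iff)
  with measure_space_lambda_system have "positive (sets ?B) \<phi>" "countably_additive (sets ?B) \<phi>"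
    by (auto simp: measure_space_def positive_def countably_additive_def)
  moreover have sa: "sigma_algebra S (sets ?B)"
    using sets.sigma_algebra_axioms[of ?B] by (simp add: space_restrict_space)
  ultimately have emeasure_M: "emeasure ?M A = \<phi> A" if "A \<in> sets ?B" for A
    using emeasure_measure_of_sigma that by blast
  have sets_M: "sets ?M = sets ?B" and space_M: "space ?M = S"
    using sa by (simp_all add: sigma_algebra.sets_measure_of_eq sigma_algebra.space_measure_of_eq)
  have f_M: "f \<in> borel_measurable ?M"
    using f by (simp add: measurable_cong_sets[OF sets_M refl])
  have levels: "{x\<in>S. f x = t} \<in> sets ?B" for t
    using measurable_sets[OF f, of "{t}"]
    by (simp add: space_restrict_space vimage_def Int_def conj_commute)
  have "finite_measure ?M"
    using \<open>\<phi> S < \<infinity>\<close> emeasure_M[OF sets.top[of ?B]]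
    by (intro finite_measureI) (simp add: space_M space_restrict_space)
  then have "finite_measure (distr ?M borel f)" by (rule finite_measure.finite_measure_distr[OF _ f_M])
  then have "countable {t. measure (distr ?M borel f) {t} \<noteq> 0}"
    by (rule finite_measure.countable_support)
  moreover have "\<phi> {x\<in>S. f x = t} = emeasure (distr ?M borel f) {t}" for t
  proof -
    have "f -` {t} \<inter> space ?M = {x\<in>S. f x = t}" by (auto simp: space_M)
    then show ?thesis using emeasure_distr[OF f_M, of "{t}"] emeasure_M[OF levels] by simp
  qed
  ultimately have "countable {t. \<phi> {x\<in>S. f x = t} \<noteq> 0}"
    using \<open>finite_measure (distr ?M borel f)\<close>
    by (auto simp: finite_measure.emeasure_eq_measure elim!: countable_subset[rotated])
  then show ?thesis
    by (intro AE_I'[OF countable_imp_null_set_lborel]) auto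
qed

end

section \<open>The codimension one Hausdorff measure is a metric outer measure\<close>

definition ball_weight :: "'a::metric_space measure \<Rightarrow> 'a \<Rightarrow> real \<Rightarrow> ennreal" where
  "ball_weight \<mu> c r = (if r = 0 then 0 else emeasure \<mu> (ball c r) / ennreal r)"

definition delta_covers :: "real \<Rightarrow> 'a::metric_space set \<Rightarrow> ((nat \<Rightarrow> 'a) \<times> (nat \<Rightarrow> real)) set" where
  "delta_covers \<delta> E = {(c, r). (\<forall>i. 0 \<le> r i \<and> r i < \<delta>) \<and> E \<subseteq> (\<Union>i. ball (c i) (r i))}"

lemma codim1_H_delta_eq_INF:
  "codim1_H_delta \<mu> \<delta> E = (INF (c, r) \<in> delta_covers \<delta> E. \<Sum>i. ball_weight \<mu> (c i) (r i))"
  unfolding codim1_H_delta_def delta_covers_def ball_weight_def by (simp add: case_prod_beta)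

lemma codim1_H_delta_le:
  "(c, r) \<in> delta_covers \<delta> E \<Longrightarrow> codim1_H_delta \<mu> \<delta> E \<le> (\<Sum>i. ball_weight \<mu> (c i) (r i))"
  unfolding codim1_H_delta_eq_INF by (rule INF_lower2) auto

lemma codim1_H_delta_mono: "A \<subseteq> B \<Longrightarrow> codim1_H_delta \<mu> \<delta> A \<le> codim1_H_delta \<mu> \<delta> B"
  unfolding codim1_H_delta_eq_INF by (rule INF_superset_mono) (auto simp: delta_covers_def)

lemma codim1_H_delta_antimono: "\<delta> \<le> \<delta>' \<Longrightarrow> codim1_H_delta \<mu> \<delta>' E \<le> codim1_H_delta \<mu> \<delta> E"
  unfolding codim1_H_delta_eq_INF delta_covers_def
  by (rule INF_superset_mono) (auto intro: order_less_le_trans)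

lemma codim1_H_delta_le_codim1_H: "0 < \<delta> \<Longrightarrow> codim1_H_delta \<mu> \<delta> E \<le> codim1_H \<mu> E"
  unfolding codim1_H_def by (rule SUP_upper) auto

lemma codim1_H_empty: "codim1_H \<mu> {} = 0"
proof -
  have "codim1_H_delta \<mu> \<delta> {} = 0" if "0 < \<delta>" for \<delta>
    using codim1_H_delta_le[of "\<lambda>_. undefined" "\<lambda>_. 0" \<delta> "{}" \<mu>] that
    by (simp add: delta_covers_def ball_weight_def)
  then show ?thesis unfolding codim1_H_def by simp
qed

lemma codim1_H_mono: "A \<subseteq> B \<Longrightarrow> codim1_H \<mu> A \<le> codim1_H \<mu> B"
  unfolding codim1_H_def by (intro SUP_mono) (auto intro: codim1_H_delta_mono)

lemma suminf_ennreal_geometric_half: "0 \<le> e \<Longrightarrow> (\<Sum>n. ennreal (e / 2 ^ Suc n)) = ennreal e"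
proof -
  assume "0 \<le> e"
  have "(\<lambda>n. e / 2 ^ Suc n) sums e"
    using sums_mult[OF power_half_series, of e] by (simp add: power_divide)
  with \<open>0 \<le> e\<close> show ?thesis by (simp add: suminf_ennreal2 sums_iff)
qed

lemma delta_covers_UNION:
  assumes C: "\<And>n. C n \<in> delta_covers \<delta> (A n)"
  shows "(\<lambda>i. fst (C (fst (prod_decode i))) (snd (prod_decode i)),
          \<lambda>i. snd (C (fst (prod_decode i))) (snd (prod_decode i))) \<in> delta_covers \<delta> (\<Union>n. A n)"
proof -
  have "x \<in> (\<Union>i. ball (fst (C (fst (prod_decode i))) (snd (prod_decode i)))
                     (snd (C (fst (prod_decode i))) (snd (prod_decode i))))" if "x \<in> A n" for x n
  proof -
    from C[of n] that obtain k where "x \<in> ball (fst (C n) k) (snd (C n) k)"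
      by (auto simp: delta_covers_def case_prod_beta)
    then show ?thesis by (intro UN_I[of "prod_encode (n, k)"]) auto
  qed
  moreover have "0 \<le> snd (C (fst (prod_decode i))) (snd (prod_decode i)) \<and>
      snd (C (fst (prod_decode i))) (snd (prod_decode i)) < \<delta>" for i
    using C[of "fst (prod_decode i)"] by (auto simp: delta_covers_def case_prod_beta)
  ultimately show ?thesis by (auto simp: delta_covers_def)
qed

lemma codim1_H_delta_UNION_le:
  fixes A :: "nat \<Rightarrow> 'a::metric_space set"
  shows "codim1_H_delta \<mu> \<delta> (\<Union>n. A n) \<le> (\<Sum>n. codim1_H_delta \<mu> \<delta> (A n))"
proof (rule ennreal_le_epsilon)
  fix e :: real
  assume fin: "(\<Sum>n. codim1_H_delta \<mu> \<delta> (A n)) < top" and "0 < e"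
  let ?H = "\<lambda>n. codim1_H_delta \<mu> \<delta> (A n)"
  have "\<exists>cr \<in> delta_covers \<delta> (A n).
      (\<Sum>i. ball_weight \<mu> (fst cr i) (snd cr i)) < ?H n + ennreal (e / 2 ^ Suc n)" for n
  proof -
    have "?H n < top" using fin ennreal_suminf_lessD[of ?H] by simp
    then have "?H n < ?H n + ennreal (e / 2 ^ Suc n)"
      using \<open>0 < e\<close> by (cases "?H n") (auto simp: ennreal_plus[symmetric] ennreal_less_iff simp del: ennreal_plus)
    then show ?thesis unfolding codim1_H_delta_eq_INF[of \<mu> \<delta> "A n"] INF_less_iff by (simp add: case_prod_beta)
  qed
  then obtain C where C: "\<And>n. C n \<in> delta_covers \<delta> (A n)"
    and C_less: "\<And>n. (\<Sum>i. ball_weight \<mu> (fst (C n) i) (snd (C n) i)) < ?H n + ennreal (e / 2 ^ Suc n)"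
    by metis
  have "(\<lambda>i. fst (C (fst (prod_decode i))) (snd (prod_decode i)),
      \<lambda>i. snd (C (fst (prod_decode i))) (snd (prod_decode i))) \<in> delta_covers \<delta> (\<Union>n. A n)"
    using C by (rule delta_covers_UNION)
  then have "codim1_H_delta \<mu> \<delta> (\<Union>n. A n)
      \<le> (\<Sum>i. ball_weight \<mu> (fst (C (fst (prod_decode i))) (snd (prod_decode i)))
                            (snd (C (fst (prod_decode i))) (snd (prod_decode i))))"
    by (rule codim1_H_delta_le)
  also have "\<dots> = (\<Sum>n. \<Sum>i. ball_weight \<mu> (fst (C n) i) (snd (C n) i))"
    by (rule suminf_ennreal_2dimen[where f = "\<lambda>p. ball_weight \<mu> (fst (C (fst p)) (snd p)) (snd (C (fst p)) (snd p))"]) simp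
  also have "\<dots> \<le> (\<Sum>n. ?H n + ennreal (e / 2 ^ Suc n))"
    by (intro suminf_le less_imp_le[OF C_less] summableI)
  also have "\<dots> = (\<Sum>n. ?H n) + (\<Sum>n. ennreal (e / 2 ^ Suc n))"
    by (rule suminf_add[symmetric]) auto
  also have "\<dots> = (\<Sum>n. ?H n) + ennreal e"
    using \<open>0 < e\<close> by (simp only: suminf_ennreal_geometric_half less_imp_le)
  finally show "codim1_H_delta \<mu> \<delta> (\<Union>n. A n) \<le> (\<Sum>n. ?H n) + ennreal e" .
qed

lemma codim1_H_UNION_le:
  fixes A :: "nat \<Rightarrow> 'a::metric_space set"
  shows "codim1_H \<mu> (\<Union>n. A n) \<le> (\<Sum>n. codim1_H \<mu> (A n))"
  unfolding codim1_H_def[of \<mu> "\<Union>n. A n"]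
proof (rule SUP_least)
  fix \<delta> :: real assume "\<delta> \<in> {0<..}"
  then have "(\<Sum>n. codim1_H_delta \<mu> \<delta> (A n)) \<le> (\<Sum>n. codim1_H \<mu> (A n))"
    by (intro suminf_le summableI codim1_H_delta_le_codim1_H) auto
  with codim1_H_delta_UNION_le[of \<mu> \<delta> A]
  show "codim1_H_delta \<mu> \<delta> (\<Union>n. A n) \<le> (\<Sum>n. codim1_H \<mu> (A n))"
    by (rule order_trans)
qed

lemma codim1_H_delta_separated_add_le:
  assumes "0 < \<delta>" "2 * \<delta> \<le> \<eta>" and sep: "\<And>a b. a \<in> A \<Longrightarrow> b \<in> B \<Longrightarrow> \<eta> \<le> dist a b"
  shows "codim1_H_delta \<mu> \<delta> A + codim1_H_delta \<mu> \<delta> B \<le> codim1_H_delta \<mu> \<delta> (A \<union> B)"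
  unfolding codim1_H_delta_eq_INF[of \<mu> \<delta> "A \<union> B"]
proof (rule INF_greatest, clarify)
  fix c r assume "(c, r) \<in> delta_covers \<delta> (A \<union> B)"
  then have r: "\<And>i. 0 \<le> r i \<and> r i < \<delta>" and cover: "A \<union> B \<subseteq> (\<Union>i. ball (c i) (r i))"
    by (auto simp: delta_covers_def)
  \<comment> \<open>A ball of radius below \<delta> cannot meet both A and B, so the cover splits into two.\<close>
  define rA where "rA i = (if ball (c i) (r i) \<inter> A \<noteq> {} then r i else 0)" for i
  define rB where "rB i = (if ball (c i) (r i) \<inter> B \<noteq> {} then r i else 0)" for i
  have "(c, rA) \<in> delta_covers \<delta> A"
    using r cover \<open>0 < \<delta>\<close> by (fastforce simp: delta_covers_def rA_def)
  moreover have "(c, rB) \<in> delta_covers \<delta> B"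
    using r cover \<open>0 < \<delta>\<close> by (fastforce simp: delta_covers_def rB_def)
  ultimately have "codim1_H_delta \<mu> \<delta> A + codim1_H_delta \<mu> \<delta> B
      \<le> (\<Sum>i. ball_weight \<mu> (c i) (rA i)) + (\<Sum>i. ball_weight \<mu> (c i) (rB i))"
    by (intro add_mono codim1_H_delta_le)
  also have "\<dots> = (\<Sum>i. ball_weight \<mu> (c i) (rA i) + ball_weight \<mu> (c i) (rB i))"
    by (rule suminf_add) auto
  also have "\<dots> \<le> (\<Sum>i. ball_weight \<mu> (c i) (r i))"
  proof (intro suminf_le summableI)
    fix i
    have "\<not> (ball (c i) (r i) \<inter> A \<noteq> {} \<and> ball (c i) (r i) \<inter> B \<noteq> {})"
    proof
      assume "ball (c i) (r i) \<inter> A \<noteq> {} \<and> ball (c i) (r i) \<inter> B \<noteq> {}"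
      then obtain a b where "a \<in> A" "b \<in> B" "dist (c i) a < r i" "dist (c i) b < r i" by auto
      then have "dist a b < 2 * \<delta>" using r[of i] dist_triangle3[of a b "c i"] by linarith
      with sep[OF \<open>a \<in> A\<close> \<open>b \<in> B\<close>] \<open>2 * \<delta> \<le> \<eta>\<close> show False by linarith
    qed
    then show "ball_weight \<mu> (c i) (rA i) + ball_weight \<mu> (c i) (rB i) \<le> ball_weight \<mu> (c i) (r i)"
      by (auto simp: rA_def rB_def ball_weight_def)
  qed
  finally show "codim1_H_delta \<mu> \<delta> A + codim1_H_delta \<mu> \<delta> B \<le> (\<Sum>i. ball_weight \<mu> (c i) (r i))" .
qed

lemma codim1_H_separated_add_le:
  assumes "0 < \<eta>" and sep: "\<And>a b. a \<in> A \<Longrightarrow> b \<in> B \<Longrightarrow> \<eta> \<le> dist a b"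
  shows "codim1_H \<mu> A + codim1_H \<mu> B \<le> codim1_H \<mu> (A \<union> B)"
proof -
  have H: "codim1_H_delta \<mu> \<delta> A + codim1_H_delta \<mu> \<delta>' B \<le> codim1_H \<mu> (A \<union> B)"
    if "0 < \<delta>" "0 < \<delta>'" for \<delta> \<delta>'
  proof -
    define \<delta>'' where "\<delta>'' = min (min \<delta> \<delta>') (\<eta> / 2)"
    have \<delta>'': "0 < \<delta>''" "2 * \<delta>'' \<le> \<eta>" "\<delta>'' \<le> \<delta>" "\<delta>'' \<le> \<delta>'"
      using that \<open>0 < \<eta>\<close> by (auto simp: \<delta>''_def)
    have "codim1_H_delta \<mu> \<delta> A + codim1_H_delta \<mu> \<delta>' B
        \<le> codim1_H_delta \<mu> \<delta>'' A + codim1_H_delta \<mu> \<delta>'' B"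
      by (intro add_mono codim1_H_delta_antimono \<delta>'')
    also have "\<dots> \<le> codim1_H_delta \<mu> \<delta>'' (A \<union> B)"
      by (rule codim1_H_delta_separated_add_le[OF \<delta>''(1,2) sep])
    also have "\<dots> \<le> codim1_H \<mu> (A \<union> B)" by (rule codim1_H_delta_le_codim1_H[OF \<delta>''(1)])
    finally show ?thesis .
  qed
  have "codim1_H \<mu> A + codim1_H \<mu> B = (SUP \<delta>\<in>{0<..}. codim1_H_delta \<mu> \<delta> A + codim1_H \<mu> B)"
    unfolding codim1_H_def[of \<mu> A] by (rule ennreal_SUP_add_left[symmetric]) auto
  also have "\<dots> = (SUP \<delta>\<in>{0<..}. SUP \<delta>'\<in>{0<..}. codim1_H_delta \<mu> \<delta> A + codim1_H_delta \<mu> \<delta>' B)"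
    unfolding codim1_H_def[of \<mu> B] by (intro SUP_cong refl ennreal_SUP_add_right) auto
  also have "\<dots> \<le> codim1_H \<mu> (A \<union> B)"
    using H by (auto intro!: SUP_least)
  finally show ?thesis .
qed

lemma metric_outer_measure_codim1_H: "metric_outer_measure (codim1_H \<mu>)"
  by unfold_locales
    (auto simp: codim1_H_empty intro: codim1_H_mono codim1_H_UNION_le codim1_H_separated_add_le)

section \<open>Traces of level sets\<close>

lemma abs_of_bool_less_diff_le:
  fixes v t w :: real
  assumes "v \<noteq> t"
  shows "\<bar>of_bool (t < w) - of_bool (t < v)\<bar> \<le> 1 / \<bar>v - t\<bar> * \<bar>w - v\<bar>"
proof -
  have "0 < \<bar>v - t\<bar>" using assms by simp
  moreover have "\<bar>v - t\<bar> \<le> \<bar>w - v\<bar>" if "(t < w) \<noteq> (t < v)" using that by auto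
  ultimately show ?thesis by (cases "t < w"; cases "t < v") (auto simp: field_simps)
qed

lemma has_trace_dominated:
  fixes \<mu> :: "'a::metric_space measure" and u w :: "'a \<Rightarrow> real"
  assumes "sets \<mu> = sets borel" and "open \<Omega>" and u: "set_borel_measurable \<mu> \<Omega> u"
    and trace: "has_trace \<mu> \<Omega> u x v" and "0 \<le> K"
    and dom: "\<And>y. y \<in> \<Omega> \<Longrightarrow> \<bar>w y - b\<bar> \<le> K * \<bar>u y - v\<bar>"
  shows "has_trace \<mu> \<Omega> w x b"
proof -
  have bound: "(\<integral>\<^sup>+ y\<in>ball x r \<inter> \<Omega>. ennreal \<bar>w y - b\<bar> \<partial>\<mu>) / emeasure \<mu> (ball x r \<inter> \<Omega>)
     \<le> ennreal K * ((\<integral>\<^sup>+ y\<in>ball x r \<inter> \<Omega>. ennreal \<bar>u y - v\<bar> \<partial>\<mu>) / emeasure \<mu> (ball x r \<inter> \<Omega>))" for r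
  proof -
    have [measurable]: "\<Omega> \<in> sets \<mu>" "ball x r \<in> sets \<mu>"
      using \<open>open \<Omega>\<close> \<open>sets \<mu> = sets borel\<close> by simp_all
    have "(\<lambda>y. ennreal \<bar>indicator \<Omega> y *\<^sub>R u y - v\<bar> * indicator (ball x r \<inter> \<Omega>) y) \<in> borel_measurable \<mu>"
      using u unfolding set_borel_measurable_def by measurable
    moreover have "(\<lambda>y. ennreal \<bar>indicator \<Omega> y *\<^sub>R u y - v\<bar> * indicator (ball x r \<inter> \<Omega>) y)
        = (\<lambda>y. ennreal \<bar>u y - v\<bar> * indicator (ball x r \<inter> \<Omega>) y)"
      by (auto simp: fun_eq_iff indicator_def)
    ultimately have meas: "(\<lambda>y. ennreal \<bar>u y - v\<bar> * indicator (ball x r \<inter> \<Omega>) y) \<in> borel_measurable \<mu>"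
      by simp
    have "(\<integral>\<^sup>+ y\<in>ball x r \<inter> \<Omega>. ennreal \<bar>w y - b\<bar> \<partial>\<mu>)
        \<le> (\<integral>\<^sup>+ y. ennreal K * (ennreal \<bar>u y - v\<bar> * indicator (ball x r \<inter> \<Omega>) y) \<partial>\<mu>)"
      using dom \<open>0 \<le> K\<close> by (intro nn_integral_mono) (auto simp: indicator_def ennreal_mult[symmetric])
    also have "\<dots> = ennreal K * (\<integral>\<^sup>+ y\<in>ball x r \<inter> \<Omega>. ennreal \<bar>u y - v\<bar> \<partial>\<mu>)"
      by (rule nn_integral_cmult[OF meas])
    finally have "(\<integral>\<^sup>+ y\<in>ball x r \<inter> \<Omega>. ennreal \<bar>w y - b\<bar> \<partial>\<mu>) / emeasure \<mu> (ball x r \<inter> \<Omega>)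
        \<le> ennreal K * (\<integral>\<^sup>+ y\<in>ball x r \<inter> \<Omega>. ennreal \<bar>u y - v\<bar> \<partial>\<mu>) / emeasure \<mu> (ball x r \<inter> \<Omega>)"
      by (rule divide_right_mono_ennreal)
    then show ?thesis by (simp add: ennreal_times_divide)
  qed
  have "((\<lambda>r. ennreal K * ((\<integral>\<^sup>+ y\<in>ball x r \<inter> \<Omega>. ennreal \<bar>u y - v\<bar> \<partial>\<mu>) / emeasure \<mu> (ball x r \<inter> \<Omega>)))
      \<longlongrightarrow> ennreal K * 0) (at_right 0)"
    using trace unfolding has_trace_def by (intro ennreal_tendsto_cmult) auto
  then have lim: "((\<lambda>r. ennreal K * ((\<integral>\<^sup>+ y\<in>ball x r \<inter> \<Omega>. ennreal \<bar>u y - v\<bar> \<partial>\<mu>) / emeasure \<mu> (ball x r \<inter> \<Omega>)))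
      \<longlongrightarrow> 0) (at_right 0)"
    by simp
  show ?thesis unfolding has_trace_def
    by (rule tendsto_sandwich[OF _ _ tendsto_const lim]; intro always_eventually allI bound zero_le)
qed

lemma has_trace_indicator_gt:
  fixes \<mu> :: "'a::metric_space measure" and u :: "'a \<Rightarrow> real"
  assumes "sets \<mu> = sets borel" and "open \<Omega>" and "set_borel_measurable \<mu> \<Omega> u"
    and "has_trace \<mu> \<Omega> u x v" and "v \<noteq> t"
  shows "has_trace \<mu> \<Omega> (indicator {y. u y > t}) x (of_bool (t < v))"
proof (rule has_trace_dominated[OF assms(1-4), where K = "1 / \<bar>v - t\<bar>"])
  fix y
  show "\<bar>indicator {y. u y > t} y - of_bool (t < v)\<bar> \<le> 1 / \<bar>v - t\<bar> * \<bar>u y - v\<bar>"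
    unfolding indicator_def mem_Collect_eq by (rule abs_of_bool_less_diff_le[OF \<open>v \<noteq> t\<close>])
qed simp

theorem mainTheorem8:
  fixes \<mu> :: "'a::complete_space measure"
    and \<Omega> :: "'a set"
    and f u :: "'a \<Rightarrow> real"
  assumes sets_mu: "sets \<mu> = sets borel"
    and doubling: "doubling_measure \<mu>"
    and PI: "poincare_11 \<mu>"
    and dom_open: "open \<Omega>" and dom_conn: "connected \<Omega>" and dom_ne: "\<Omega> \<noteq> {}"
    and dom_bdd: "bounded \<Omega>"
    and compl_pos: "emeasure \<mu> (UNIV - \<Omega>) > 0"
    and H_bdry_fin: "codim1_H \<mu> (frontier \<Omega>) < \<infinity>"
    and H_bdry_doubling: "boundary_doubling \<mu> \<Omega>"
    and H_bdry_ahlfors: "lower_codim1_ahlfors \<mu> \<Omega>"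
    and f_L1: "integrable (codim1_H_on \<mu> (frontier \<Omega>)) f"
    and u_L1: "set_integrable \<mu> \<Omega> u"
    and trace_u: "H_ae_on \<mu> (frontier \<Omega>) (\<lambda>x. has_trace \<mu> \<Omega> u x (f x))"
  shows "AE t in lborel. H_ae_on \<mu> (frontier \<Omega>)
           (\<lambda>x. has_trace \<mu> \<Omega> (indicator {y. u y > t}) x (indicator {y. f y > t} x))"
proof -
  interpret metric_outer_measure "codim1_H \<mu>" by (rule metric_outer_measure_codim1_H)
  let ?S = "frontier \<Omega>"
  have sets_H_on: "sets (codim1_H_on \<mu> ?S) = sets (restrict_space borel ?S)"
    using sets.sets_measure_of_eq[of "restrict_space borel ?S" "codim1_H \<mu>"]
    unfolding codim1_H_on_def by (simp only: space_restrict_space space_borel Int_UNIV_right)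
  have "f \<in> borel_measurable (restrict_space borel ?S)"
    using borel_measurable_integrable[OF f_L1] unfolding measurable_cong_sets[OF sets_H_on refl] .
  then have null_levels: "AE t in lborel. codim1_H \<mu> {x\<in>?S. f x = t} = 0"
    using H_bdry_fin by (intro AE_level_sets_null) auto
  obtain N where "codim1_H \<mu> N = 0" and trace: "\<And>x. x \<in> ?S - N \<Longrightarrow> has_trace \<mu> \<Omega> u x (f x)"
    using trace_u unfolding H_ae_on_def by blast
  have u_meas: "set_borel_measurable \<mu> \<Omega> u"
    using u_L1 unfolding set_integrable_def set_borel_measurable_def by (rule borel_measurable_integrable)
  from null_levels show ?thesis
  proof (rule eventually_mono)
    fix t assume "codim1_H \<mu> {x\<in>?S. f x = t} = 0"
    then have "codim1_H \<mu> (N \<union> {x\<in>?S. f x = t}) = 0"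
      using Un_le[of N "{x\<in>?S. f x = t}"] \<open>codim1_H \<mu> N = 0\<close> by simp
    moreover have "has_trace \<mu> \<Omega> (indicator {y. u y > t}) x (indicator {y. f y > t} x)"
      if "x \<in> ?S - (N \<union> {x\<in>?S. f x = t})" for x
    proof -
      have "x \<in> ?S - N" "f x \<noteq> t" using that by auto
      from has_trace_indicator_gt[OF sets_mu dom_open u_meas trace[OF this(1)] this(2)]
      show ?thesis by (simp add: indicator_def)
    qed
    ultimately show "H_ae_on \<mu> ?S (\<lambda>x. has_trace \<mu> \<Omega> (indicator {y. u y > t}) x (indicator {y. f y > t} x))"
      unfolding H_ae_on_def by blast
  qed
qed

end
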